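(* Let $\bar r\in(0,1)$ be a local minimum point of $F$. Then $$\lim_{r\to\bar r^-}\partial_rG(r,\bar r)=-\lim_{r\to\bar r^+}\partial_rG(r,\bar r)=\frac12.$$
   Context: Let $n\ge2$, $|\partial B_1|$ the $(n-1)$-dimensional measure of the unit sphere in $\mathbb{R}^n$, and $V\ge0$, $V\not\equiv0$, a smooth function on $[0,1]$ (the profile of a smooth radial potential on the unit ball). For $s\in(0,1)$, $G(\cdot,s)$ is the Green function of $\mathcal{L}u=-u''-\frac{n-1}{r}u'+V(r)u$ on $(0,1)$ with $u'(0)=0$ and $u'(1)=0$: that is, $-\partial_r^2G(r,s)-\frac{n-1}{r}\partial_rG(r,s)+V(r)G(r,s)=\delta_s$ in distributions on $(0,1)$ (Dirac mass w.r.t. $dr$), $\partial_rG(0,s)=\partial_rG(1,s)=0$. $F(r)=|\partial B_1|\,r^{n-1}/G(r,r)$ for $r\in(0,1)$. *)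

theory Defs
  imports "HOL-Analysis.Analysis"
begin

text \<open>(n-1)-dimensional measure of the unit sphere in R^n: n times the volume of the unit ball.\<close>
definition sphere_area :: "nat \<Rightarrow> real" where
  "sphere_area n = real n * unit_ball_vol (real n)"

definition smooth_on_unit :: "(real \<Rightarrow> real) \<Rightarrow> bool" where
  "smooth_on_unit V \<longleftrightarrow> (\<exists>D :: nat \<Rightarrow> real \<Rightarrow> real. D 0 = V \<and>
     (\<forall>k. \<forall>x\<in>{0..1}. (D k has_real_derivative D (Suc k) x) (at x within {0..1})))"

text \<open>G is the Green function of  L u = -u'' - (n-1)/r u' + V u  on (0,1) with u'(0)=u'(1)=0:
  for every pole s in (0,1), G(.,s) is continuous on (0,1), a classical solution of L u = 0 on
  (0,1) minus s, satisfies the Neumann conditions at 0 and 1, and has a jump of -1 in its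
  r-derivative at s (which is the meaning of L G(.,s) = delta_s in distributions).\<close>
definition green_fn :: "nat \<Rightarrow> (real \<Rightarrow> real) \<Rightarrow> (real \<Rightarrow> real \<Rightarrow> real) \<Rightarrow> bool" where
  "green_fn n V G \<longleftrightarrow> (\<forall>s\<in>{0<..<1}.
     continuous_on {0<..<1} (\<lambda>r. G r s) \<and>
     (\<forall>r\<in>{0<..<1} - {s}.
        (\<lambda>x. G x s) differentiable (at r) \<and>
        deriv (\<lambda>x. G x s) differentiable (at r) \<and>
        - deriv (deriv (\<lambda>x. G x s)) r - (real n - 1) / r * deriv (\<lambda>x. G x s) r
          + V r * G r s = 0) \<and>
     ((\<lambda>r. deriv (\<lambda>x. G x s) r) \<longlongrightarrow> 0) (at_right 0) \<and>
     ((\<lambda>r. deriv (\<lambda>x. G x s) r) \<longlongrightarrow> 0) (at_left 1) \<and>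
     (\<exists>a b. ((\<lambda>r. deriv (\<lambda>x. G x s) r) \<longlongrightarrow> a) (at_left s) \<and>
            ((\<lambda>r. deriv (\<lambda>x. G x s) r) \<longlongrightarrow> b) (at_right s) \<and> b - a = -1))"

definition F_fun :: "nat \<Rightarrow> (real \<Rightarrow> real \<Rightarrow> real) \<Rightarrow> real \<Rightarrow> real" where
  "F_fun n G r = sphere_area n * r ^ (n - 1) / G r r"

end

theory Submission
  imports Defs
begin

text \<open>
  For two poles \<open>s, t\<close> the weighted Wronskian
  \<open>W(x) = x\<^sup>n\<^sup>-\<^sup>1 (G(x,s) \<partial>\<^sub>xG(x,t) - \<partial>\<^sub>xG(x,s) G(x,t))\<close>
  is locally constant away from \<open>s\<close> and \<open>t\<close>. The Neumann conditions make it vanish outside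
  the interval between the poles, and the unit jump of \<open>\<partial>\<^sub>xG(\<cdot>,s)\<close> at \<open>s\<close> fixes its value
  \<open>s\<^sup>n\<^sup>-\<^sup>1 G(s,t)\<close> in between; in particular \<open>s\<^sup>n\<^sup>-\<^sup>1 G(s,t)\<close> is symmetric.

  Choose \<open>t\<^sub>0 < r < t\<^sub>1\<close> with \<open>G(t\<^sub>0,t\<^sub>1) \<noteq> 0\<close> (otherwise \<open>G(\<cdot>,r)\<close> would vanish identically,
  contradicting the jump). Cramer's rule for these Wronskians shows that near a pole
  \<open>s \<in> (t\<^sub>0,t\<^sub>1)\<close> the function \<open>G(\<cdot>,s)\<close> is a multiple of \<open>G(\<cdot>,t\<^sub>1)\<close> on the left and of
  \<open>G(\<cdot>,t\<^sub>0)\<close> on the right; continuity and the jump determine both multiples. With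
  \<open>p = G(\<cdot>,t\<^sub>0) G(\<cdot>,t\<^sub>1)\<close> and \<open>E = t\<^sub>0\<^sup>n\<^sup>-\<^sup>1 G(t\<^sub>0,t\<^sub>1)\<close> this gives
  \<open>E G(s,s) = s\<^sup>n\<^sup>-\<^sup>1 p(s)\<close>, so \<open>F\<close> is a constant multiple of \<open>1/p\<close>, while the two
  one-sided derivatives of \<open>G(\<cdot>,s)\<close> at \<open>s\<close> are the two summands of \<open>s\<^sup>n\<^sup>-\<^sup>1 p'(s)\<close>,
  divided by \<open>E\<close>. At a local minimum of \<open>F\<close> we have \<open>p'(r) = 0\<close>, so the
  one-sided derivatives cancel; since they differ by \<open>-1\<close>, they are \<open>\<plusminus>1/2\<close>.
\<close>

lemma bounded_of_bounded_derivative: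
  fixes f f' :: "real \<Rightarrow> real"
  assumes deriv: "\<And>x. x \<in> {c<..<d} \<Longrightarrow> (f has_real_derivative f' x) (at x)"
    and bound: "\<And>x. x \<in> {c<..<d} \<Longrightarrow> \<bar>f' x\<bar> \<le> K"
    and x: "x \<in> {c<..<d}" and y: "y \<in> {c<..<d}"
  shows "\<bar>f x\<bar> \<le> \<bar>f y\<bar> + K * (d - c)"
proof -
  have "norm (f x - f y) \<le> K * norm (x - y)"
    by (rule field_differentiable_bound[OF convex_real_interval(8)])
       (use x y deriv bound in \<open>auto intro: has_field_derivative_at_within\<close>)
  also have "\<dots> \<le> K * (d - c)"
    using x y order_trans[OF abs_ge_zero bound[OF x]] by (intro mult_left_mono) auto
  finally show ?thesis by simp
qed

lemma Bfun_at_right_of_deriv_tendsto: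
  fixes f f' :: "real \<Rightarrow> real"
  assumes "(f' \<longlongrightarrow> l) (at_right a)"
    and "\<forall>\<^sub>F x in at_right a. (f has_real_derivative f' x) (at x)"
  shows "Bfun f (at_right a)"
proof -
  have "\<forall>\<^sub>F x in at_right a. \<bar>f' x\<bar> \<le> \<bar>l\<bar> + 1 \<and> (f has_real_derivative f' x) (at x)"
    using tendstoD[OF assms(1) zero_less_one] assms(2)
    by eventually_elim (auto simp: dist_real_def)
  then obtain b where "a < b"
    and b: "\<And>x. a < x \<Longrightarrow> x < b \<Longrightarrow> \<bar>f' x\<bar> \<le> \<bar>l\<bar> + 1 \<and> (f has_real_derivative f' x) (at x)"
    unfolding eventually_at_right_field by blast
  have "\<forall>x\<in>{a<..<b}. \<bar>f x\<bar> \<le> \<bar>f ((a + b) / 2)\<bar> + (\<bar>l\<bar> + 1) * (b - a)"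
    using b \<open>a < b\<close> by (intro ballI bounded_of_bounded_derivative[where f' = f']) auto
  with eventually_at_right_real[OF \<open>a < b\<close>]
  have "\<forall>\<^sub>F x in at_right a. \<bar>f x\<bar> \<le> \<bar>f ((a + b) / 2)\<bar> + (\<bar>l\<bar> + 1) * (b - a)"
    by (auto elim: eventually_mono)
  then show ?thesis by (intro BfunI) simp
qed

lemma Bfun_at_left_of_deriv_tendsto:
  fixes f f' :: "real \<Rightarrow> real"
  assumes "(f' \<longlongrightarrow> l) (at_left a)"
    and "\<forall>\<^sub>F x in at_left a. (f has_real_derivative f' x) (at x)"
  shows "Bfun f (at_left a)"
proof -
  have "\<forall>\<^sub>F x in at_left a. \<bar>f' x\<bar> \<le> \<bar>l\<bar> + 1 \<and> (f has_real_derivative f' x) (at x)"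
    using tendstoD[OF assms(1) zero_less_one] assms(2)
    by eventually_elim (auto simp: dist_real_def)
  then obtain b where "b < a"
    and b: "\<And>x. b < x \<Longrightarrow> x < a \<Longrightarrow> \<bar>f' x\<bar> \<le> \<bar>l\<bar> + 1 \<and> (f has_real_derivative f' x) (at x)"
    unfolding eventually_at_left_field by blast
  have "\<forall>x\<in>{b<..<a}. \<bar>f x\<bar> \<le> \<bar>f ((b + a) / 2)\<bar> + (\<bar>l\<bar> + 1) * (a - b)"
    using b \<open>b < a\<close> by (intro ballI bounded_of_bounded_derivative[where f' = f']) auto
  with eventually_at_left_real[OF \<open>b < a\<close>]
  have "\<forall>\<^sub>F x in at_left a. \<bar>f x\<bar> \<le> \<bar>f ((b + a) / 2)\<bar> + (\<bar>l\<bar> + 1) * (a - b)"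
    by (auto elim: eventually_mono)
  then show ?thesis by (intro BfunI) simp
qed

lemma tendsto_zero_mult_Bfun:
  fixes f g :: "'a \<Rightarrow> 'b::real_normed_algebra"
  assumes "Bfun f F" and "(g \<longlongrightarrow> 0) F"
  shows "((\<lambda>x. f x * g x) \<longlongrightarrow> 0) F"
  using bounded_bilinear.Bfun_prod_Zfun[OF bounded_bilinear_mult assms(1)] assms(2)
  by (simp add: tendsto_Zfun_iff)

lemma deriv_eq_0_at_local_min_of_divide:
  fixes p :: "real \<Rightarrow> real"
  assumes deriv: "(p has_real_derivative D) (at x)" and "m \<noteq> 0"
    and min: "\<forall>\<^sub>F y in at x. m / p x \<le> m / p y"
  shows "D = 0"
proof -
  have dq: "((\<lambda>y. m * p y) has_derivative (*) (m * D)) (at x)"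
    using DERIV_cmult[OF deriv, of m] by (simp add: has_field_derivative_def)
  have "(*) (m * D) = (\<lambda>h. 0)"
  proof (cases "p x = 0")
    case True
    \<comment> \<open>then \<open>m / p x = 0\<close> by the convention \<open>m / 0 = 0\<close>, and \<open>m * p\<close> has a local minimum\<close>
    have "\<forall>\<^sub>F y in at x. m * p x \<le> m * p y"
      using min by eventually_elim (use True in \<open>auto simp: zero_le_divide_iff zero_le_mult_iff\<close>)
    then show ?thesis by (rule has_derivative_local_min[OF dq])
  next
    case False
    have "((\<lambda>y. p y * p x) \<longlongrightarrow> p x * p x) (at x)"
      using DERIV_isCont[OF deriv] unfolding isCont_def by (intro tendsto_intros)
    then have "\<forall>\<^sub>F y in at x. p y * p x > 0"
      by (rule order_tendstoD(1)) (use False not_real_square_gt_zero in blast)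
    then have "\<forall>\<^sub>F y in at x. m * p y \<le> m * p x"
      using min
    proof eventually_elim
      case (elim y)
      then have "p y \<noteq> 0" by auto
      have "m / p x * (p y * p x) \<le> m / p y * (p y * p x)"
        using elim by (intro mult_right_mono) auto
      with \<open>p y \<noteq> 0\<close> False show ?case by (simp add: field_simps)
    qed
    then show ?thesis by (rule has_derivative_local_max[OF dq])
  qed
  then show "D = 0" using \<open>m \<noteq> 0\<close> by (metis mult_eq_0_iff mult.right_neutral)
qed

lemma matching_coefficients:
  fixes \<alpha> \<beta> u u' w w' k :: "'a::comm_ring"
  assumes match: "\<alpha> * u = \<beta> * w" and jump: "\<alpha> * u' - \<beta> * w' = k"
  shows "\<alpha> * (w * u' - w' * u) = k * w" and "\<beta> * (w * u' - w' * u) = k * u"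
proof -
  have "\<alpha> * (w * u' - w' * u) = w * (\<alpha> * u') - w' * (\<alpha> * u)" by (simp add: algebra_simps)
  also have "\<dots> = w * (\<alpha> * u' - \<beta> * w')" by (simp add: match algebra_simps)
  finally show "\<alpha> * (w * u' - w' * u) = k * w" by (simp add: jump mult.commute)
  have "\<beta> * (w * u' - w' * u) = u' * (\<beta> * w) - u * (\<beta> * w')" by (simp add: algebra_simps)
  also have "\<dots> = u * (\<alpha> * u' - \<beta> * w')" by (simp add: match[symmetric] algebra_simps)
  finally show "\<beta> * (w * u' - w' * u) = k * u" by (simp add: jump mult.commute)
qed

lemma
  fixes f :: "'a::linorder_topology \<Rightarrow> 'b::topological_space"
  assumes "isCont f x"
  shows isCont_tendsto_at_left: "(f \<longlongrightarrow> f x) (at_left x)"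
    and isCont_tendsto_at_right: "(f \<longlongrightarrow> f x) (at_right x)"
  using assms unfolding isCont_def filterlim_at_split by auto

lemma tendsto_unique_eventually_eq:
  fixes f g :: "'a \<Rightarrow> 'b::t2_space"
  assumes "F \<noteq> bot" "(f \<longlongrightarrow> a) F" "(g \<longlongrightarrow> b) F" "\<forall>\<^sub>F x in F. f x = g x"
  shows "a = b"
  using tendsto_unique[OF assms(1,2)] assms(3,4) by (simp add: tendsto_cong)

lemma
  fixes f :: "real \<Rightarrow> 'b::t2_space"
  assumes "a < b" and "\<forall>x\<in>{a<..<b}. f x = c"
  shows tendsto_at_right_eq_const: "(f \<longlongrightarrow> l) (at_right a) \<Longrightarrow> l = c"
    and tendsto_at_left_eq_const: "(f \<longlongrightarrow> l) (at_left b) \<Longrightarrow> l = c"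
proof -
  show "l = c" if "(f \<longlongrightarrow> l) (at_right a)"
    using eventually_at_right_real[OF assms(1)] assms(2)
    by (intro tendsto_unique_eventually_eq[OF _ that tendsto_const]) (auto elim!: eventually_mono)
  show "l = c" if "(f \<longlongrightarrow> l) (at_left b)"
    using eventually_at_left_real[OF assms(1)] assms(2)
    by (intro tendsto_unique_eventually_eq[OF _ that tendsto_const]) (auto elim!: eventually_mono)
qed

locale neumann_green =
  fixes n :: nat and V :: "real \<Rightarrow> real" and G :: "real \<Rightarrow> real \<Rightarrow> real"
  assumes green: "green_fn n V G" and dim_pos: "n \<ge> 1"
begin

definition dG :: "real \<Rightarrow> real \<Rightarrow> real" where
  "dG s = deriv (\<lambda>x. G x s)"

definition dG_left :: "real \<Rightarrow> real" where
  "dG_left s = Lim (at_left s) (dG s)"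

definition dG_right :: "real \<Rightarrow> real" where
  "dG_right s = Lim (at_right s) (dG s)"

definition wronskian :: "real \<Rightarrow> real \<Rightarrow> real \<Rightarrow> real" where
  "wronskian s t x = x ^ (n - 1) * (G x s * dG t x - dG s x * G x t)"

lemma
  assumes "s \<in> {0<..<1}" "x \<in> {0<..<1}" "x \<noteq> s"
  shows has_real_derivative_G: "((\<lambda>y. G y s) has_real_derivative dG s x) (at x)"
    and has_real_derivative_dG:
      "(dG s has_real_derivative V x * G x s - (real n - 1) / x * dG s x) (at x)"
proof -
  have "(\<lambda>x. G x s) differentiable (at x) \<and> deriv (\<lambda>x. G x s) differentiable (at x) \<and>
      - deriv (deriv (\<lambda>x. G x s)) x - (real n - 1) / x * deriv (\<lambda>x. G x s) x + V x * G x s = 0"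
    using green assms unfolding green_fn_def by blast
  then show "((\<lambda>y. G y s) has_real_derivative dG s x) (at x)"
    and "(dG s has_real_derivative V x * G x s - (real n - 1) / x * dG s x) (at x)"
    by (auto simp: dG_def DERIV_deriv_iff_real_differentiable algebra_simps)
qed

lemma isCont_G: "s \<in> {0<..<1} \<Longrightarrow> x \<in> {0<..<1} \<Longrightarrow> isCont (\<lambda>y. G y s) x"
  using green unfolding green_fn_def by (meson continuous_on_eq_continuous_at open_greaterThanLessThan)

lemma isCont_dG: "s \<in> {0<..<1} \<Longrightarrow> x \<in> {0<..<1} \<Longrightarrow> x \<noteq> s \<Longrightarrow> isCont (dG s) x"
  by (rule DERIV_isCont[OF has_real_derivative_dG])

lemma
  assumes "s \<in> {0<..<1}"
  shows dG_tendsto_at_right_0: "(dG s \<longlongrightarrow> 0) (at_right 0)"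
    and dG_tendsto_at_left_1: "(dG s \<longlongrightarrow> 0) (at_left 1)"
  using green assms unfolding green_fn_def dG_def by blast+

lemma
  assumes "s \<in> {0<..<1}"
  shows dG_tendsto_dG_left: "(dG s \<longlongrightarrow> dG_left s) (at_left s)"
    and dG_tendsto_dG_right: "(dG s \<longlongrightarrow> dG_right s) (at_right s)"
    and dG_jump: "dG_right s = dG_left s - 1"
proof -
  obtain a b where ab: "(dG s \<longlongrightarrow> a) (at_left s)" "(dG s \<longlongrightarrow> b) (at_right s)" "b - a = -1"
    using green assms unfolding green_fn_def dG_def by blast
  moreover have "dG_left s = a" "dG_right s = b"
    using ab unfolding dG_left_def dG_right_def by (auto intro: tendsto_Lim)
  ultimately show "(dG s \<longlongrightarrow> dG_left s) (at_left s)" "(dG s \<longlongrightarrow> dG_right s) (at_right s)"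
    "dG_right s = dG_left s - 1" by auto
qed

lemma
  assumes s: "s \<in> {0<..<1}"
  shows Bfun_G_at_right_0: "Bfun (\<lambda>x. G x s) (at_right 0)"
    and Bfun_G_at_left_1: "Bfun (\<lambda>x. G x s) (at_left 1)"
proof -
  have "\<forall>\<^sub>F x in at_right 0. ((\<lambda>y. G y s) has_real_derivative dG s x) (at x)"
    using eventually_at_right_real[of 0 s] s
    by (auto elim!: eventually_mono intro: has_real_derivative_G)
  then show "Bfun (\<lambda>x. G x s) (at_right 0)"
    by (rule Bfun_at_right_of_deriv_tendsto[OF dG_tendsto_at_right_0[OF s]])
  have "\<forall>\<^sub>F x in at_left 1. ((\<lambda>y. G y s) has_real_derivative dG s x) (at x)"
    using eventually_at_left_real[of s 1] s
    by (auto elim!: eventually_mono intro: has_real_derivative_G)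
  then show "Bfun (\<lambda>x. G x s) (at_left 1)"
    by (rule Bfun_at_left_of_deriv_tendsto[OF dG_tendsto_at_left_1[OF s]])
qed

lemma dG_eq_0_if_G_vanishes:
  assumes "\<forall>y\<in>{a<..<b}. G y s = 0" and "x \<in> {a<..<b}"
  shows "dG s x = 0"
proof -
  have "\<forall>\<^sub>F y in nhds x. G y s = 0"
    using assms by (auto intro: eventually_nhds_in_open[THEN eventually_mono])
  then show ?thesis
    unfolding dG_def by (simp add: deriv_cong_ev[of _ "\<lambda>_. 0"])
qed

lemma wronskian_swap: "wronskian s t x = - wronskian t s x"
  unfolding wronskian_def by (simp add: algebra_simps)

lemma wronskian_cramer:
  "wronskian t0 t1 x * G x s - wronskian t0 s x * G x t1 = G x t0 * wronskian s t1 x"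
  "wronskian t0 t1 x * dG s x - wronskian t0 s x * dG t1 x = dG t0 x * wronskian s t1 x"
  unfolding wronskian_def by (simp_all add: algebra_simps)

lemma has_real_derivative_wronskian:
  assumes "s \<in> {0<..<1}" "t \<in> {0<..<1}" "x \<in> {0<..<1}" "x \<noteq> s" "x \<noteq> t"
  shows "(wronskian s t has_real_derivative 0) (at x)"
proof -
  note derivs = has_real_derivative_G[of s x] has_real_derivative_G[of t x]
    has_real_derivative_dG[of s x] has_real_derivative_dG[of t x]
  have power_deriv: "real (n - Suc 0) * x ^ (n - Suc (Suc 0)) = (real n - 1) / x * x ^ (n - Suc 0)"
  proof (cases "n = 1")
    case False
    then have "n - Suc 0 = Suc (n - Suc (Suc 0))" using dim_pos by auto
    then show ?thesis using assms(3) dim_pos by (subst (2) \<open>n - Suc 0 = _\<close>) (simp add: of_nat_diff)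
  qed simp
  show ?thesis
    unfolding wronskian_def[abs_def] using assms
    by (auto intro!: derivative_eq_intros derivs simp: power_deriv field_simps)
qed

lemma
  assumes "s \<in> {0<..<1}" "t \<in> {0<..<1}" "0 \<le> a" "a < b" "b \<le> 1"
    and "s \<notin> {a<..<b}" "t \<notin> {a<..<b}" and x: "x \<in> {a<..<b}"
  shows wronskian_eq_limit_at_right: "(wronskian s t \<longlongrightarrow> l) (at_right a) \<Longrightarrow> wronskian s t x = l"
    and wronskian_eq_limit_at_left: "(wronskian s t \<longlongrightarrow> l) (at_left b) \<Longrightarrow> wronskian s t x = l"
proof -
  have "\<exists>C. \<forall>y\<in>{a<..<b}. wronskian s t y = C"
  proof (rule has_field_derivative_zero_constant)
    fix y assume "y \<in> {a<..<b}"
    with assms have "y \<in> {0<..<1}" "y \<noteq> s" "y \<noteq> t" by auto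
    with assms(1,2) show "(wronskian s t has_field_derivative 0) (at y within {a<..<b})"
      by (intro has_field_derivative_at_within[OF has_real_derivative_wronskian])
  qed simp
  then obtain C where C: "\<forall>y\<in>{a<..<b}. wronskian s t y = C" ..
  show "(wronskian s t \<longlongrightarrow> l) (at_right a) \<Longrightarrow> wronskian s t x = l"
    and "(wronskian s t \<longlongrightarrow> l) (at_left b) \<Longrightarrow> wronskian s t x = l"
    using tendsto_at_right_eq_const[OF \<open>a < b\<close> C] tendsto_at_left_eq_const[OF \<open>a < b\<close> C] C x
    by auto
qed

lemma
  assumes s: "s \<in> {0<..<1}" and t: "t \<in> {0<..<1}"
  shows wronskian_tendsto_at_right_0: "(wronskian s t \<longlongrightarrow> 0) (at_right 0)"
    and wronskian_tendsto_at_left_1: "(wronskian s t \<longlongrightarrow> 0) (at_left 1)"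
proof -
  have "((\<lambda>x. G x s * dG t x) \<longlongrightarrow> 0) (at_right 0)" "((\<lambda>x. G x t * dG s x) \<longlongrightarrow> 0) (at_right 0)"
    by (rule tendsto_zero_mult_Bfun[OF Bfun_G_at_right_0[OF s] dG_tendsto_at_right_0[OF t]],
        rule tendsto_zero_mult_Bfun[OF Bfun_G_at_right_0[OF t] dG_tendsto_at_right_0[OF s]])
  then have "((\<lambda>x. x ^ (n - 1) * (G x s * dG t x - G x t * dG s x)) \<longlongrightarrow> 0 ^ (n - 1) * (0 - 0))
      (at_right 0)"
    by (intro tendsto_mult tendsto_diff tendsto_power tendsto_ident_at)
  then show "(wronskian s t \<longlongrightarrow> 0) (at_right 0)"
    unfolding wronskian_def[abs_def] by (simp add: mult.commute)
  have "((\<lambda>x. G x s * dG t x) \<longlongrightarrow> 0) (at_left 1)" "((\<lambda>x. G x t * dG s x) \<longlongrightarrow> 0) (at_left 1)"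
    by (rule tendsto_zero_mult_Bfun[OF Bfun_G_at_left_1[OF s] dG_tendsto_at_left_1[OF t]],
        rule tendsto_zero_mult_Bfun[OF Bfun_G_at_left_1[OF t] dG_tendsto_at_left_1[OF s]])
  then have "((\<lambda>x. x ^ (n - 1) * (G x s * dG t x - G x t * dG s x)) \<longlongrightarrow> 1 ^ (n - 1) * (0 - 0))
      (at_left 1)"
    by (intro tendsto_mult tendsto_diff tendsto_power tendsto_ident_at)
  then show "(wronskian s t \<longlongrightarrow> 0) (at_left 1)"
    unfolding wronskian_def[abs_def] by (simp add: mult.commute)
qed

lemma
  assumes s: "s \<in> {0<..<1}" and t: "t \<in> {0<..<1}"
  shows wronskian_eq_0_below_poles: "x \<in> {0<..<min s t} \<Longrightarrow> wronskian s t x = 0"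
    and wronskian_eq_0_above_poles: "x \<in> {max s t<..<1} \<Longrightarrow> wronskian s t x = 0"
  using wronskian_eq_limit_at_right[OF s t, of 0 "min s t" x 0]
    wronskian_eq_limit_at_left[OF s t, of "max s t" 1 x 0]
    wronskian_tendsto_at_right_0[OF s t] wronskian_tendsto_at_left_1[OF s t] s t
  by auto

lemma
  assumes s: "s \<in> {0<..<1}" and t: "t \<in> {0<..<1}" and "t \<noteq> s"
  shows wronskian_tendsto_at_left_pole:
      "(wronskian s t \<longlongrightarrow> s ^ (n - 1) * (G s s * dG t s - dG_left s * G s t)) (at_left s)"
    and wronskian_tendsto_at_right_pole:
      "(wronskian s t \<longlongrightarrow> s ^ (n - 1) * (G s s * dG t s - dG_right s * G s t)) (at_right s)"
proof -
  have cont: "isCont (\<lambda>y. G y s) s" "isCont (\<lambda>y. G y t) s" "isCont (dG t) s"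
    using assms by (auto intro: isCont_G isCont_dG)
  show "(wronskian s t \<longlongrightarrow> s ^ (n - 1) * (G s s * dG t s - dG_left s * G s t)) (at_left s)"
    unfolding wronskian_def[abs_def]
    by (intro tendsto_mult tendsto_diff tendsto_power tendsto_ident_at isCont_tendsto_at_left
        dG_tendsto_dG_left s cont)
  show "(wronskian s t \<longlongrightarrow> s ^ (n - 1) * (G s s * dG t s - dG_right s * G s t)) (at_right s)"
    unfolding wronskian_def[abs_def]
    by (intro tendsto_mult tendsto_diff tendsto_power tendsto_ident_at isCont_tendsto_at_right
        dG_tendsto_dG_right s cont)
qed

lemma wronskian_right_of_pole:
  assumes s: "s \<in> {0<..<1}" and t: "t \<in> {0<..<1}" and "s < t" and x: "x \<in> {s<..<t}"
  shows "wronskian s t x = s ^ (n - 1) * G s t"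
proof -
  note lim = wronskian_tendsto_at_left_pole[OF s t] wronskian_tendsto_at_right_pole[OF s t]
  have right: "wronskian s t x = s ^ (n - 1) * (G s s * dG t s - dG_right s * G s t)"
    by (rule wronskian_eq_limit_at_right[OF s t _ \<open>s < t\<close> _ _ _ x lim(2)])
      (use s t \<open>s < t\<close> in auto)
  have "s ^ (n - 1) * (G s s * dG t s - dG_left s * G s t) = 0"
    by (rule tendsto_at_left_eq_const[of 0 s "wronskian s t", OF _ _ lim(1)])
      (use wronskian_eq_0_below_poles[OF s t] s \<open>s < t\<close> in auto)
  with right have "wronskian s t x = s ^ (n - 1) * ((dG_left s - dG_right s) * G s t)"
    unfolding right_diff_distrib left_diff_distrib by linarith
  then show ?thesis
    using dG_jump[OF s] by simp
qed

lemma wronskian_left_of_pole: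
  assumes s: "s \<in> {0<..<1}" and t: "t \<in> {0<..<1}" and "t < s" and x: "x \<in> {t<..<s}"
  shows "wronskian s t x = - (s ^ (n - 1) * G s t)"
proof -
  note lim = wronskian_tendsto_at_left_pole[OF s t] wronskian_tendsto_at_right_pole[OF s t]
  have left: "wronskian s t x = s ^ (n - 1) * (G s s * dG t s - dG_left s * G s t)"
    by (rule wronskian_eq_limit_at_left[OF s t _ \<open>t < s\<close> _ _ _ x lim(1)])
      (use s t \<open>t < s\<close> in auto)
  have "s ^ (n - 1) * (G s s * dG t s - dG_right s * G s t) = 0"
    by (rule tendsto_at_right_eq_const[of s 1 "wronskian s t", OF _ _ lim(2)])
      (use wronskian_eq_0_above_poles[OF s t] s \<open>t < s\<close> in auto)
  with left have "wronskian s t x = s ^ (n - 1) * ((dG_right s - dG_left s) * G s t)"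
    unfolding right_diff_distrib left_diff_distrib by linarith
  then show ?thesis
    using dG_jump[OF s] by simp
qed

lemma green_symmetry:
  assumes "0 < s" "s < t" "t < 1"
  shows "s ^ (n - 1) * G s t = t ^ (n - 1) * G t s"
proof -
  have "(s + t) / 2 \<in> {s<..<t}" using assms by auto
  then show ?thesis
    using wronskian_right_of_pole[of s t] wronskian_left_of_pole[of t s] wronskian_swap[of s t] assms
    by fastforce
qed

lemma exists_G_ne_0_across:
  assumes r: "r \<in> {0<..<1}"
  shows "\<exists>t0 t1. 0 < t0 \<and> t0 < r \<and> r < t1 \<and> t1 < 1 \<and> G t0 t1 \<noteq> 0"
proof (rule ccontr)
  assume "\<not> ?thesis"
  then have vanish: "G t0 t1 = 0" if "0 < t0" "t0 < r" "r < t1" "t1 < 1" for t0 t1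
    using that by blast
  have below: "G x r = 0" if x: "x \<in> {0<..<r}" for x
  proof -
    have "\<forall>y\<in>{r<..<1}. G y x = 0"
    proof
      fix y assume y: "y \<in> {r<..<1}"
      have "y ^ (n - 1) * G y x = x ^ (n - 1) * G x y"
        using green_symmetry[of x y] x y by auto
      also have "\<dots> = 0"
        using vanish[of x y] x y by auto
      finally show "G y x = 0" using y r by auto
    qed
    then have "G r x = 0"
      using r x by (intro tendsto_at_right_eq_const[of r 1 "\<lambda>y. G y x"]
        isCont_tendsto_at_right isCont_G) auto
    then show ?thesis
      using green_symmetry[of x r] x r by simp
  qed
  have above: "G x r = 0" if x: "x \<in> {r<..<1}" for x
  proof -
    have "G r x = 0"
      using r x vanish[of _ x] by (intro tendsto_at_left_eq_const[of 0 r "\<lambda>y. G y x"]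
        isCont_tendsto_at_left isCont_G) auto
    then show ?thesis
      using green_symmetry[of r x] x r by simp
  qed
  have "dG_left r = 0"
    using r dG_eq_0_if_G_vanishes[of 0 r r] below
    by (intro tendsto_at_left_eq_const[of 0 r "dG r"] dG_tendsto_dG_left) auto
  moreover have "dG_right r = 0"
    using r dG_eq_0_if_G_vanishes[of r 1 r] above
    by (intro tendsto_at_right_eq_const[of r 1 "dG r"] dG_tendsto_dG_right) auto
  ultimately show False
    using dG_jump[OF r] by simp
qed

lemma
  assumes "0 < t0" "t0 < s" "s < t1" "t1 < 1"
  shows G_proportional_left_of_pole:
      "x \<in> {t0<..<s} \<Longrightarrow>
        t0 ^ (n - 1) * G t0 t1 * G x s = t0 ^ (n - 1) * G t0 s * G x t1"
    and dG_proportional_left_of_pole: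
      "x \<in> {t0<..<s} \<Longrightarrow>
        t0 ^ (n - 1) * G t0 t1 * dG s x = t0 ^ (n - 1) * G t0 s * dG t1 x"
    and G_proportional_right_of_pole:
      "x \<in> {s<..<t1} \<Longrightarrow>
        t0 ^ (n - 1) * G t0 t1 * G x s = s ^ (n - 1) * G s t1 * G x t0"
    and dG_proportional_right_of_pole:
      "x \<in> {s<..<t1} \<Longrightarrow>
        t0 ^ (n - 1) * G t0 t1 * dG s x = s ^ (n - 1) * G s t1 * dG t0 x"
proof -
  have poles: "t0 \<in> {0<..<1}" "s \<in> {0<..<1}" "t1 \<in> {0<..<1}" using assms by auto
  note W = wronskian_right_of_pole[OF poles(1,3)] wronskian_right_of_pole[OF poles(1,2)]
    wronskian_right_of_pole[OF poles(2,3)]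
  show "t0 ^ (n - 1) * G t0 t1 * G x s = t0 ^ (n - 1) * G t0 s * G x t1"
    and "t0 ^ (n - 1) * G t0 t1 * dG s x = t0 ^ (n - 1) * G t0 s * dG t1 x"
    if x: "x \<in> {t0<..<s}"
  proof -
    have "wronskian s t1 x = 0"
      using wronskian_eq_0_below_poles[OF poles(2,3)] x assms by auto
    then show "t0 ^ (n - 1) * G t0 t1 * G x s = t0 ^ (n - 1) * G t0 s * G x t1"
      and "t0 ^ (n - 1) * G t0 t1 * dG s x = t0 ^ (n - 1) * G t0 s * dG t1 x"
      using wronskian_cramer[of t0 t1 x s] W x assms by (auto simp: mult.commute)
  qed
  show "t0 ^ (n - 1) * G t0 t1 * G x s = s ^ (n - 1) * G s t1 * G x t0"
    and "t0 ^ (n - 1) * G t0 t1 * dG s x = s ^ (n - 1) * G s t1 * dG t0 x"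
    if x: "x \<in> {s<..<t1}"
  proof -
    have "wronskian t0 s x = 0"
      using wronskian_eq_0_above_poles[OF poles(1,2)] x assms by auto
    then show "t0 ^ (n - 1) * G t0 t1 * G x s = s ^ (n - 1) * G s t1 * G x t0"
      and "t0 ^ (n - 1) * G t0 t1 * dG s x = s ^ (n - 1) * G s t1 * dG t0 x"
      using wronskian_cramer[of t0 t1 x s] W x assms by (auto simp: mult.commute)
  qed
qed

lemma
  assumes t: "0 < t0" "t0 < s" "s < t1" "t1 < 1"
  shows G_diagonal_from_left: "t0 ^ (n - 1) * G t0 t1 * G s s = t0 ^ (n - 1) * G t0 s * G s t1"
    and G_diagonal_from_right: "t0 ^ (n - 1) * G t0 t1 * G s s = s ^ (n - 1) * G s t1 * G s t0"
    and dG_left_proportional: "t0 ^ (n - 1) * G t0 t1 * dG_left s = t0 ^ (n - 1) * G t0 s * dG t1 s"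
    and dG_right_proportional: "t0 ^ (n - 1) * G t0 t1 * dG_right s = s ^ (n - 1) * G s t1 * dG t0 s"
proof -
  have s: "s \<in> {0<..<1}" using t by auto
  have cont: "isCont (\<lambda>y. G y s) s" "isCont (\<lambda>y. G y t0) s" "isCont (\<lambda>y. G y t1) s"
    "isCont (dG t0) s" "isCont (dG t1) s"
    using t by (auto intro: isCont_G isCont_dG)
  have left: "\<forall>\<^sub>F x in at_left s. x \<in> {t0<..<s}" and right: "\<forall>\<^sub>F x in at_right s. x \<in> {s<..<t1}"
    using eventually_at_left_real[of t0 s] eventually_at_right_real[of s t1] t by auto
  show "t0 ^ (n - 1) * G t0 t1 * G s s = t0 ^ (n - 1) * G t0 s * G s t1"
    using left G_proportional_left_of_pole[OF t] t
    by (intro tendsto_unique_eventually_eq[where F = "at_left s", OF _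
        tendsto_mult_left[OF isCont_tendsto_at_left[OF cont(1)]]
        tendsto_mult_left[OF isCont_tendsto_at_left[OF cont(3)]]])
      (auto elim!: eventually_mono)
  show "t0 ^ (n - 1) * G t0 t1 * G s s = s ^ (n - 1) * G s t1 * G s t0"
    using right G_proportional_right_of_pole[OF t] t
    by (intro tendsto_unique_eventually_eq[where F = "at_right s", OF _
        tendsto_mult_left[OF isCont_tendsto_at_right[OF cont(1)]]
        tendsto_mult_left[OF isCont_tendsto_at_right[OF cont(2)]]])
      (auto elim!: eventually_mono)
  show "t0 ^ (n - 1) * G t0 t1 * dG_left s = t0 ^ (n - 1) * G t0 s * dG t1 s"
    using left dG_proportional_left_of_pole[OF t] t
    by (intro tendsto_unique_eventually_eq[where F = "at_left s", OF _
        tendsto_mult_left[OF dG_tendsto_dG_left[OF s]]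
        tendsto_mult_left[OF isCont_tendsto_at_left[OF cont(5)]]])
      (auto elim!: eventually_mono)
  show "t0 ^ (n - 1) * G t0 t1 * dG_right s = s ^ (n - 1) * G s t1 * dG t0 s"
    using right dG_proportional_right_of_pole[OF t] t
    by (intro tendsto_unique_eventually_eq[where F = "at_right s", OF _
        tendsto_mult_left[OF dG_tendsto_dG_right[OF s]]
        tendsto_mult_left[OF isCont_tendsto_at_right[OF cont(4)]]])
      (auto elim!: eventually_mono)
qed

lemma
  assumes t: "0 < t0" "t0 < s" "s < t1" "t1 < 1" and "G t0 t1 \<noteq> 0"
  shows G_diagonal_factorization:
      "t0 ^ (n - 1) * G t0 t1 * G s s = s ^ (n - 1) * (G s t0 * G s t1)"
    and dG_left_factorization:
      "t0 ^ (n - 1) * G t0 t1 * dG_left s = s ^ (n - 1) * (G s t0 * dG t1 s)"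
    and dG_right_factorization:
      "t0 ^ (n - 1) * G t0 t1 * dG_right s = s ^ (n - 1) * (G s t1 * dG t0 s)"
proof -
  define E where "E = t0 ^ (n - 1) * G t0 t1"
  define c where "c = t0 ^ (n - 1) * G t0 s"
  define c' where "c' = s ^ (n - 1) * G s t1"
  define D where "D = G s t0 * dG t1 s - dG t0 s * G s t1"
  have "E \<noteq> 0" using t \<open>G t0 t1 \<noteq> 0\<close> by (simp add: E_def)
  have E_D: "E = s ^ (n - 1) * D"
    using wronskian_right_of_pole[of t0 t1 s] t by (simp add: E_def D_def wronskian_def)
  have match: "c * G s t1 = c' * G s t0"
    unfolding c_def c'_def
    using G_diagonal_from_left[OF t] G_diagonal_from_right[OF t] by (rule trans[OF sym])
  have "c * dG t1 s - c' * dG t0 s = E * dG_left s - E * dG_right s"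
    by (simp only: E_def c_def c'_def dG_left_proportional[OF t] dG_right_proportional[OF t])
  also have "\<dots> = E * (dG_left s - dG_right s)"
    by (simp add: right_diff_distrib)
  also have "\<dots> = E"
    using dG_jump[of s] t by simp
  finally have jump: "c * dG t1 s - c' * dG t0 s = E" .
  have cD: "c * D = E * G s t0" "c' * D = E * G s t1"
    unfolding D_def using match jump by (rule matching_coefficients)+
  have scale: "E * X = s ^ (n - 1) * (z * y)" if "E * X = k * y" "k * D = E * z" for X k y z
  proof -
    have "E * (E * X) = E * (k * y)" using that(1) by simp
    also have "\<dots> = s ^ (n - 1) * (k * D) * y" by (subst E_D) (simp add: algebra_simps)
    also have "\<dots> = E * (s ^ (n - 1) * (z * y))" unfolding that(2) by (simp add: algebra_simps)
    finally show ?thesis using \<open>E \<noteq> 0\<close> by simp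
  qed
  show "t0 ^ (n - 1) * G t0 t1 * G s s = s ^ (n - 1) * (G s t0 * G s t1)"
    using scale[OF _ cD(1)] G_diagonal_from_left[OF t] by (simp add: E_def c_def)
  show "t0 ^ (n - 1) * G t0 t1 * dG_left s = s ^ (n - 1) * (G s t0 * dG t1 s)"
    using scale[OF _ cD(1)] dG_left_proportional[OF t] by (simp add: E_def c_def)
  show "t0 ^ (n - 1) * G t0 t1 * dG_right s = s ^ (n - 1) * (G s t1 * dG t0 s)"
    using scale[OF _ cD(2)] dG_right_proportional[OF t] by (simp add: E_def c'_def)
qed

lemma dG_left_add_dG_right_eq_0_at_local_min:
  assumes r: "r \<in> {0<..<1}" and min: "\<forall>\<^sub>F s in at r. F_fun n G r \<le> F_fun n G s"
  shows "dG_left r + dG_right r = 0"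
proof -
  obtain t0 t1 where t: "0 < t0" "t0 < r" "r < t1" "t1 < 1" and "G t0 t1 \<noteq> 0"
    using exists_G_ne_0_across[OF r] by blast
  define E where "E = t0 ^ (n - 1) * G t0 t1"
  define p where "p = (\<lambda>s. G s t0 * G s t1)"
  have "E \<noteq> 0" using t \<open>G t0 t1 \<noteq> 0\<close> by (simp add: E_def)
  have "sphere_area n > 0"
    using dim_pos by (simp add: sphere_area_def)
  have F_eq: "F_fun n G s = sphere_area n * E / p s" if s: "s \<in> {t0<..<t1}" for s
  proof -
    have "E * G s s = s ^ (n - 1) * p s"
      unfolding E_def p_def by (rule G_diagonal_factorization) (use s t \<open>G t0 t1 \<noteq> 0\<close> in auto)
    then have "G s s = s ^ (n - 1) * p s / E"
      using \<open>E \<noteq> 0\<close> by (simp add: field_simps)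
    then have "F_fun n G s = s ^ (n - 1) * (sphere_area n * E) / (s ^ (n - 1) * p s)"
      unfolding F_fun_def by (simp only: divide_divide_eq_right ac_simps)
    also have "\<dots> = sphere_area n * E / p s"
      using s t by (intro nonzero_mult_divide_mult_cancel_left) simp
    finally show ?thesis .
  qed
  have "\<forall>\<^sub>F s in at r. s \<in> {t0<..<t1}"
    using t by (intro eventually_at_in_open') auto
  with min have "\<forall>\<^sub>F s in at r. sphere_area n * E / p r \<le> sphere_area n * E / p s"
  proof eventually_elim
    case (elim s)
    then show ?case using F_eq[of r] F_eq[of s] t by simp
  qed
  moreover have "(p has_real_derivative dG t0 r * G r t1 + dG t1 r * G r t0) (at r)"
    unfolding p_def using r t by (intro DERIV_mult has_real_derivative_G) auto
  ultimately have crit: "dG t0 r * G r t1 + dG t1 r * G r t0 = 0"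
    by (intro deriv_eq_0_at_local_min_of_divide) (use \<open>E \<noteq> 0\<close> \<open>sphere_area n > 0\<close> in simp_all)
  have "E * (dG_left r + dG_right r) = E * dG_left r + E * dG_right r"
    by (rule distrib_left)
  also have "\<dots> = r ^ (n - 1) * (dG t0 r * G r t1 + dG t1 r * G r t0)"
    unfolding E_def dG_left_factorization[OF t \<open>G t0 t1 \<noteq> 0\<close>]
      dG_right_factorization[OF t \<open>G t0 t1 \<noteq> 0\<close>]
    by (simp add: algebra_simps)
  finally show ?thesis using crit \<open>E \<noteq> 0\<close> by simp
qed

end

theorem proposition4p3:
  fixes n :: nat and V :: "real \<Rightarrow> real" and G :: "real \<Rightarrow> real \<Rightarrow> real" and rbar :: real
  assumes "n \<ge> 2"
    and "smooth_on_unit V"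
    and "\<forall>x\<in>{0..1}. V x \<ge> 0"
    and "\<exists>x\<in>{0..1}. V x \<noteq> 0"
    and "green_fn n V G"
    and "rbar \<in> {0<..<1}"
    and "eventually (\<lambda>r. F_fun n G rbar \<le> F_fun n G r) (at rbar)"
  shows "((\<lambda>r. deriv (\<lambda>x. G x rbar) r) \<longlongrightarrow> 1/2) (at_left rbar) \<and>
         ((\<lambda>r. deriv (\<lambda>x. G x rbar) r) \<longlongrightarrow> -1/2) (at_right rbar)"
proof -
  interpret neumann_green n V G
    using assms(1,5) by unfold_locales auto
  have "dG_left rbar + dG_right rbar = 0"
    using assms(6,7) by (rule dG_left_add_dG_right_eq_0_at_local_min)
  with dG_jump[OF assms(6)] have "dG_left rbar = 1/2" "dG_right rbar = -1/2"
    by linarith+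
  with dG_tendsto_dG_left[OF assms(6)] dG_tendsto_dG_right[OF assms(6)] show ?thesis
    unfolding dG_def by simp
qed

end
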